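(* Let $\varepsilon\in(0,1]$, $n\ge1$, and let $W$ be a random channel drawn from $\mathcal{W}_{Q,\varepsilon}$. With probability at least $3/4$, every bipartite independent set $(A,B)$ of $G_{W,n}$ satisfies $$\frac1n\log_2(|A||B|)\le q+\log_2\frac{3}{\varepsilon}.$$
   Context: Fix an integer $q\ge1$, $Q=2^q$, $[Q]=\{1,\dots,Q\}$, and a symbol $\phi\notin[Q]$. $\mathcal{W}_{Q,\varepsilon}$ is the distribution over functions $W:[Q]^2\to([Q]\cup\{\phi\})^2$ in which, independently for every $(x,y)\in[Q]^2$, $W(x,y)=(\phi,\phi)$ with probability $\varepsilon$ and $W(x,y)=(x,y)$ otherwise. $G_{W,n}$ is the bipartite graph whose two sides are two copies of $[Q]^n$, with $x^{(n)}=(x_1,\dots,x_n)$ (left) adjacent to $y^{(n)}=(y_1,\dots,y_n)$ (right) iff there is an index $i$ with $W(x_i,y_i)=(\phi,\phi)$. In a bipartite graph with sides $X,Y$, a bipartite independent set (BPIS) is a pair $(A,B)$ with $A\subseteq X$, $B\subseteq Y$ and no edge between $A$ and $B$; its size is $|A|\cdot|B|$. *)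

theory Defs
  imports "HOL-Probability.Probability"
begin

text \<open>The extra symbol phi is encoded as None; a symbol x in [Q] as Some x.
  A channel is a function W :: nat \<times> nat \<Rightarrow> nat option \<times> nat option,
  relevant on [Q]^2 = {1..Q} \<times> {1..Q}.\<close>

definition erase_channel :: "(nat \<times> nat \<Rightarrow> bool) \<Rightarrow> nat \<times> nat \<Rightarrow> nat option \<times> nat option" where
  "erase_channel e = (\<lambda>(x, y). if e (x, y) then (None, None) else (Some x, Some y))"

definition W_dist :: "nat \<Rightarrow> real \<Rightarrow> (nat \<times> nat \<Rightarrow> nat option \<times> nat option) pmf" where
  "W_dist Q \<epsilon> = map_pmf erase_channel
      (Pi_pmf ({1..Q} \<times> {1..Q}) False (\<lambda>_. bernoulli_pmf \<epsilon>))"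

definition words :: "nat \<Rightarrow> nat \<Rightarrow> nat list set" where
  "words Q n = {xs. length xs = n \<and> set xs \<subseteq> {1..Q}}"

definition G_adj :: "(nat \<times> nat \<Rightarrow> nat option \<times> nat option) \<Rightarrow> nat \<Rightarrow> nat list \<Rightarrow> nat list \<Rightarrow> bool" where
  "G_adj W n xs ys \<longleftrightarrow> (\<exists>i<n. W (xs ! i, ys ! i) = (None, None))"

definition is_BPIS :: "(nat \<times> nat \<Rightarrow> nat option \<times> nat option) \<Rightarrow> nat \<Rightarrow> nat \<Rightarrow> nat list set \<Rightarrow> nat list set \<Rightarrow> bool" where
  "is_BPIS W Q n A B \<longleftrightarrow> A \<subseteq> words Q n \<and> B \<subseteq> words Q n \<and>
     (\<forall>a\<in>A. \<forall>b\<in>B. \<not> G_adj W n a b)"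

end

theory Submission
  imports Defs
begin

text \<open>A bipartite independent set \<open>(A, B)\<close> of \<open>G\<^sub>W\<^sub>,\<^sub>n\<close> projects, in every
  coordinate \<open>i\<close>, to a rectangle \<open>S\<^sub>i \<times> T\<^sub>i \<subseteq> [Q]\<^sup>2\<close> on which \<open>W\<close> never erases, and
  \<open>|A| |B| \<le> \<Prod>\<^sub>i |S\<^sub>i| |T\<^sub>i|\<close>. So it suffices that every erasure-free rectangle has area at
  most \<open>M = 3Q/\<epsilon>\<close>. A fixed rectangle of area \<open>k > M\<close> is erasure-free with probability
  \<open>(1 - \<epsilon>)\<^sup>k \<le> e\<^sup>-\<^sup>3\<^sup>Q\<close>, and a union bound over the \<open>4\<^sup>Q\<close> pairs \<open>(S, T)\<close> leaves
  failure probability at most \<open>(4/e\<^sup>3)\<^sup>Q \<le> 1/4\<close>.\<close>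

definition erasure_free :: "(nat \<times> nat \<Rightarrow> nat option \<times> nat option) \<Rightarrow> nat set \<Rightarrow> nat set \<Rightarrow> bool" where
  "erasure_free W S T \<longleftrightarrow> (\<forall>x\<in>S. \<forall>y\<in>T. W (x, y) \<noteq> (None, None))"

lemma card_le_prod_card_nth_image:
  assumes "\<And>xs. xs \<in> A \<Longrightarrow> length xs = n"
  shows "card A \<le> (\<Prod>i<n. card ((\<lambda>xs. xs ! i) ` A))"
proof (cases "finite A")
  case True
  let ?f = "\<lambda>xs. restrict (\<lambda>i. xs ! i) {..<n}"
  have "inj_on ?f A"
  proof
    fix xs ys assume "xs \<in> A" "ys \<in> A" and eq: "?f xs = ?f ys"
    show "xs = ys"
    proof (rule nth_equalityI)
      show "length xs = length ys"
        using assms \<open>xs \<in> A\<close> \<open>ys \<in> A\<close> by simp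
      show "xs ! i = ys ! i" if "i < length xs" for i
        using fun_cong[OF eq, of i] that assms \<open>xs \<in> A\<close> by simp
    qed
  qed
  then have "card A = card (?f ` A)"
    by (simp add: card_image)
  also have "\<dots> \<le> card (\<Pi>\<^sub>E i\<in>{..<n}. (\<lambda>xs. xs ! i) ` A)"
    using True by (intro card_mono finite_PiE) (auto simp: PiE_def extensional_def)
  also have "\<dots> = (\<Prod>i<n. card ((\<lambda>xs. xs ! i) ` A))"
    by (simp add: card_PiE)
  finally show ?thesis .
qed simp

lemma BPIS_card_mult_le_power:
  fixes M :: real
  assumes rect: "\<And>S T. S \<subseteq> {1..Q} \<Longrightarrow> T \<subseteq> {1..Q} \<Longrightarrow> erasure_free W S T \<Longrightarrow>
                   real (card S * card T) \<le> M"
    and "is_BPIS W Q n A B"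
  shows "real (card A * card B) \<le> M ^ n"
proof -
  have A: "A \<subseteq> words Q n" and B: "B \<subseteq> words Q n"
    and indep: "\<forall>a\<in>A. \<forall>b\<in>B. \<not> G_adj W n a b"
    using assms(2) unfolding is_BPIS_def by auto
  define S where "S i = (\<lambda>xs. xs ! i) ` A" for i
  define T where "T i = (\<lambda>xs. xs ! i) ` B" for i
  have area: "real (card (S i) * card (T i)) \<le> M" if "i < n" for i
  proof (rule rect)
    show "S i \<subseteq> {1..Q}" "T i \<subseteq> {1..Q}"
      using A B \<open>i < n\<close> unfolding S_def T_def words_def by (force dest: nth_mem)+
    show "erasure_free W (S i) (T i)"
      using indep \<open>i < n\<close> unfolding S_def T_def G_adj_def erasure_free_def by auto
  qed
  have "card A * card B \<le> (\<Prod>i<n. card (S i)) * (\<Prod>i<n. card (T i))"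
    unfolding S_def T_def using A B
    by (intro mult_le_mono card_le_prod_card_nth_image) (auto simp: words_def)
  then have "real (card A * card B) \<le> (\<Prod>i<n. real (card (S i) * card (T i)))"
    by (metis of_nat_le_iff of_nat_prod prod.distrib)
  also have "\<dots> \<le> (\<Prod>i<n. M)"
    using area by (intro prod_mono) auto
  finally show ?thesis
    by simp
qed

lemma log_div_le_log_if_le_power:
  fixes b x M :: real
  assumes "0 \<le> x" "x \<le> M ^ n" "1 \<le> M" "0 < n" "1 < b"
  shows "log b x / n \<le> log b M"
proof (cases "x = 0")
  case False
  then have "log b x \<le> log b (M ^ n)"
    using assms by simp
  also have "\<dots> = n * log b M"
    using assms by (simp add: log_nat_power)
  finally show ?thesis
    using assms by (simp add: divide_le_eq mult.commute)
qed (use assms in \<open>simp add: log_def\<close>)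

lemma prob_Pi_bernoulli_all_False:
  assumes "finite I" "R \<subseteq> I" "0 \<le> \<epsilon>" "\<epsilon> \<le> 1"
  shows "measure_pmf.prob (Pi_pmf I False (\<lambda>_. bernoulli_pmf \<epsilon>)) {e. \<forall>z\<in>R. \<not> e z}
           = (1 - \<epsilon>) ^ card R"
proof -
  have "{e. \<forall>z\<in>R. \<not> e z} = Pi I (\<lambda>z. if z \<in> R then {False} else UNIV)"
    using assms(2) by (auto simp: Pi_def)
  then have "measure_pmf.prob (Pi_pmf I False (\<lambda>_. bernoulli_pmf \<epsilon>)) {e. \<forall>z\<in>R. \<not> e z}
      = (\<Prod>z\<in>I. measure_pmf.prob (bernoulli_pmf \<epsilon>) (if z \<in> R then {False} else UNIV))"
    using assms(1) by (simp add: measure_Pi_pmf_Pi)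
  also have "\<dots> = (\<Prod>z\<in>I. if z \<in> R then 1 - \<epsilon> else 1)"
    using assms(3,4) by (intro prod.cong) (auto simp: measure_pmf_single)
  also have "\<dots> = (1 - \<epsilon>) ^ card R"
    using assms(1,2) by (simp add: prod.If_cases Int_absorb1)
  finally show ?thesis .
qed

lemma prob_erasure_free_large_rectangle_le:
  fixes \<epsilon> M :: real
  assumes "0 \<le> \<epsilon>" "\<epsilon> \<le> 1"
  shows "measure_pmf.prob (W_dist Q \<epsilon>)
           {W. \<exists>S T. S \<subseteq> {1..Q} \<and> T \<subseteq> {1..Q} \<and> M < real (card S * card T) \<and> erasure_free W S T}
         \<le> 4 ^ Q * exp (- \<epsilon> * M)"
proof -
  define p where "p = Pi_pmf ({1..Q} \<times> {1..Q}) False (\<lambda>_. bernoulli_pmf \<epsilon>)"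
  define P where "P = {(S, T). S \<subseteq> {1..Q} \<and> T \<subseteq> {1..Q} \<and> M < real (card S * card T)}"
  have P_sub: "P \<subseteq> Pow {1..Q} \<times> Pow {1..Q}"
    by (auto simp: P_def)
  then have finite_P: "finite P"
    by (rule finite_subset) simp
  have "card P \<le> card (Pow {1..Q} \<times> Pow {1..Q})"
    using P_sub by (intro card_mono) auto
  also have "\<dots> = 4 ^ Q"
    by (simp add: card_cartesian_product card_Pow flip: power_mult_distrib)
  finally have card_P: "card P \<le> 4 ^ Q" .
  have each: "measure_pmf.prob p {e. \<forall>z\<in>S \<times> T. \<not> e z} \<le> exp (- \<epsilon> * M)"
    if "(S, T) \<in> P" for S T
  proof -
    have S: "S \<subseteq> {1..Q}" and T: "T \<subseteq> {1..Q}" and large: "M < real (card S * card T)"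
      using that by (auto simp: P_def)
    have "measure_pmf.prob p {e. \<forall>z\<in>S \<times> T. \<not> e z} = (1 - \<epsilon>) ^ (card S * card T)"
      unfolding p_def using S T assms
      by (subst prob_Pi_bernoulli_all_False) (auto simp: card_cartesian_product)
    also have "\<dots> \<le> exp (- \<epsilon>) ^ (card S * card T)"
      using assms exp_ge_add_one_self[of "- \<epsilon>"] by (intro power_mono) auto
    also have "\<dots> = exp (- \<epsilon> * real (card S * card T))"
      by (simp add: mult.commute flip: exp_of_nat_mult)
    also have "\<dots> \<le> exp (- \<epsilon> * M)"
      using large assms(1) by (simp add: mult_left_mono)
    finally show ?thesis .
  qed
  have "erase_channel -`
      {W. \<exists>S T. S \<subseteq> {1..Q} \<and> T \<subseteq> {1..Q} \<and> M < real (card S * card T) \<and> erasure_free W S T}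
      = (\<Union>(S, T)\<in>P. {e. \<forall>z\<in>S \<times> T. \<not> e z})"
    by (auto simp: P_def erasure_free_def erase_channel_def)
  then have "measure_pmf.prob (W_dist Q \<epsilon>)
      {W. \<exists>S T. S \<subseteq> {1..Q} \<and> T \<subseteq> {1..Q} \<and> M < real (card S * card T) \<and> erasure_free W S T}
      = measure_pmf.prob p (\<Union>(S, T)\<in>P. {e. \<forall>z\<in>S \<times> T. \<not> e z})"
    by (simp add: W_dist_def p_def)
  also have "\<dots> \<le> (\<Sum>(S, T)\<in>P. measure_pmf.prob p {e. \<forall>z\<in>S \<times> T. \<not> e z})"
    using measure_UNION_le[OF finite_P, of "\<lambda>(S, T). {e. \<forall>z\<in>S \<times> T. \<not> e z}" p]
    by (simp add: case_prod_unfold)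
  also have "\<dots> \<le> (\<Sum>_\<in>P. exp (- \<epsilon> * M))"
    using each by (intro sum_mono) auto
  also have "\<dots> \<le> 4 ^ Q * exp (- \<epsilon> * M)"
    using card_P by (simp add: mult_right_mono numeral_power_le_of_nat_cancel_iff)
  finally show ?thesis .
qed

lemma four_power_mult_exp_le:
  assumes "2 \<le> Q"
  shows "4 ^ Q * exp (- 3 * real Q) \<le> 1 / 4"
proof -
  have "exp (3::real) \<ge> 1 + 3 + 3\<^sup>2 / 2"
    by (rule exp_lower_Taylor_quadratic) simp
  then have base: "4 * exp (- 3) \<le> (1 / 2 :: real)"
    by (simp add: exp_minus field_simps)
  have "4 ^ Q * exp (- 3 * real Q) = (4 * exp (- 3)) ^ Q"
    by (simp add: power_mult_distrib mult.commute flip: exp_of_nat_mult)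
  also have "\<dots> \<le> (1 / 2) ^ Q"
    using base by (intro power_mono) auto
  also have "\<dots> \<le> (1 / 2) ^ 2"
    using assms by (intro power_decreasing) auto
  finally show ?thesis
    by (simp add: power2_eq_square)
qed

lemma prob_BPIS_log_bound_ge:
  fixes \<epsilon> M :: real
  assumes "0 \<le> \<epsilon>" "\<epsilon> \<le> 1" "1 \<le> M" "0 < n"
  shows "measure_pmf.prob (W_dist Q \<epsilon>)
           {W. \<forall>A B. is_BPIS W Q n A B \<longrightarrow> log 2 (real (card A * card B)) / real n \<le> log 2 M}
         \<ge> 1 - 4 ^ Q * exp (- \<epsilon> * M)"
proof -
  define bad where "bad = {W. \<exists>S T. S \<subseteq> {1..Q} \<and> T \<subseteq> {1..Q} \<and>
                                  M < real (card S * card T) \<and> erasure_free W S T}"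
  have good: "log 2 (real (card A * card B)) / real n \<le> log 2 M"
    if "W \<notin> bad" "is_BPIS W Q n A B" for W A B
  proof -
    have "real (card S * card T) \<le> M"
      if "S \<subseteq> {1..Q}" "T \<subseteq> {1..Q}" "erasure_free W S T" for S T
      using \<open>W \<notin> bad\<close> that unfolding bad_def by (auto simp: not_less)
    then have "real (card A * card B) \<le> M ^ n"
      using \<open>is_BPIS W Q n A B\<close> by (rule BPIS_card_mult_le_power)
    then show ?thesis
      using assms(3,4) by (intro log_div_le_log_if_le_power) auto
  qed
  have "1 - 4 ^ Q * exp (- \<epsilon> * M) \<le> 1 - measure_pmf.prob (W_dist Q \<epsilon>) bad"
    using prob_erasure_free_large_rectangle_le[OF assms(1,2), of Q M] unfolding bad_def by simp
  also have "\<dots> = measure_pmf.prob (W_dist Q \<epsilon>) (UNIV - bad)"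
    using measure_pmf.prob_compl[of bad "W_dist Q \<epsilon>"] by simp
  also have "\<dots> \<le> measure_pmf.prob (W_dist Q \<epsilon>)
                   {W. \<forall>A B. is_BPIS W Q n A B \<longrightarrow> log 2 (real (card A * card B)) / real n \<le> log 2 M}"
    using good by (intro measure_pmf.finite_measure_mono) auto
  finally show ?thesis .
qed

theorem proposition2:
  fixes q n :: nat and \<epsilon> :: real
  assumes "q \<ge> 1" and "0 < \<epsilon>" and "\<epsilon> \<le> 1" and "n \<ge> 1"
  shows "measure_pmf.prob (W_dist (2 ^ q) \<epsilon>)
           {W. \<forall>A B. is_BPIS W (2 ^ q) n A B \<longrightarrow>
                 log 2 (real (card A * card B)) / real n \<le> real q + log 2 (3 / \<epsilon>)}
         \<ge> 3 / 4"
proof -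
  define Q :: nat where "Q = 2 ^ q"
  define M where "M = real Q * (3 / \<epsilon>)"
  have "2 \<le> Q"
    using assms(1) unfolding Q_def by (simp add: self_le_power)
  have "1 \<le> 3 / \<epsilon>"
    using assms(2,3) by simp
  then have "1 \<le> M"
    unfolding M_def using \<open>2 \<le> Q\<close> mult_mono[of 1 "real Q" 1 "3 / \<epsilon>"] by simp
  have "log 2 M = real q + log 2 (3 / \<epsilon>)"
    unfolding M_def Q_def using assms(2) by (subst log_mult_pos) (auto simp: log_nat_power)
  moreover have "\<epsilon> * M = 3 * real Q"
    using assms(2) unfolding M_def by simp
  moreover have "4 ^ Q * exp (- 3 * real Q) \<le> 1 / 4"
    using \<open>2 \<le> Q\<close> by (rule four_power_mult_exp_le)
  ultimately show ?thesis
    using prob_BPIS_log_bound_ge[of \<epsilon> M n Q] \<open>1 \<le> M\<close> assms unfolding Q_def by simp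
qed

end
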